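(* Let $q$ be a prime power and let $\mathcal{A}$ be an essential free arrangement in $\mathbb{F}_q^3$ with exponents $(1,d_2,d_3)$, where $d_2\leq d_3$. Then $d_2\leq q$.
   Context: A (central) hyperplane arrangement $\mathcal{A}$ in $V=\mathbb{K}^\ell$ is a finite set of codimension-one linear subspaces; it is essential if the intersection of all its hyperplanes is $\{0\}$. Let $S=\mathbb{K}[x_1,\dots,x_\ell]$ be the polynomial ring of $V$, and for each $H\in\mathcal{A}$ fix a nonzero linear form $\alpha_H$ with kernel $H$. $\mathrm{Der}_V=\bigoplus_i S\,\partial/\partial x_i$ is the $S$-module of polynomial vector fields. The module of logarithmic vector fields is $D(\mathcal{A})=\{\delta\in \mathrm{Der}_V : \delta(\alpha_H)\in\alpha_H S \text{ for all } H\in\mathcal{A}\}$. $\mathcal{A}$ is free if $D(\mathcal{A})$ is a free $S$-module; then it has a basis of homogeneous (polynomial-degree) elements, and the multiset of their degrees (the degree of $\sum f_i\partial/\partial x_i$ being the common degree of the homogeneous coefficients $f_i$) is called the exponents of $\mathcal{A}$. *)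

theory Defs
  imports Main "HOL-Library.Poly_Mapping"
begin

datatype var3 = X1 | X2 | X3

text \<open>The polynomial ring S = K[x1,x2,x3]: finitely supported maps from monomials
  (exponent vectors var3 =>0 nat) to coefficients; multiplication is convolution.\<close>
type_synonym 'a poly3 = "(var3 \<Rightarrow>\<^sub>0 nat) \<Rightarrow>\<^sub>0 'a"

definition mdeg :: "(var3 \<Rightarrow>\<^sub>0 nat) \<Rightarrow> nat" where
  "mdeg m = sum (Poly_Mapping.lookup m) (Poly_Mapping.keys m)"

text \<open>p is homogeneous of degree d (the zero polynomial is homogeneous of every degree).\<close>
definition homogeneous :: "'a::zero poly3 \<Rightarrow> nat \<Rightarrow> bool" where
  "homogeneous p d \<longleftrightarrow> (\<forall>m\<in>Poly_Mapping.keys p. mdeg m = d)"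

definition const3 :: "'a::zero \<Rightarrow> 'a poly3" where
  "const3 c = Poly_Mapping.single 0 c"

definition var :: "var3 \<Rightarrow> 'a::{zero,one} poly3" where
  "var i = Poly_Mapping.single (Poly_Mapping.single i 1) 1"

definition linform :: "(var3 \<Rightarrow> 'a::comm_ring_1) \<Rightarrow> 'a poly3" where
  "linform a = const3 (a X1) * var X1 + const3 (a X2) * var X2 + const3 (a X3) * var X3"

text \<open>Polynomial vector fields Der_V = S d/dx1 + S d/dx2 + S d/dx3, represented by
  their coefficient functions; application of a derivation to a linear form.\<close>
type_synonym 'a der3 = "var3 \<Rightarrow> 'a poly3"

definition apply_lin :: "'a::comm_ring_1 der3 \<Rightarrow> (var3 \<Rightarrow> 'a) \<Rightarrow> 'a poly3" where
  "apply_lin \<delta> a = const3 (a X1) * \<delta> X1 + const3 (a X2) * \<delta> X2 + const3 (a X3) * \<delta> X3"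

definition lin_kernel :: "(var3 \<Rightarrow> 'a::comm_ring_1) \<Rightarrow> (var3 \<Rightarrow> 'a) set" where
  "lin_kernel a = {v. a X1 * v X1 + a X2 * v X2 + a X3 * v X3 = 0}"

definition is_hyperplane :: "(var3 \<Rightarrow> 'a::field) set \<Rightarrow> bool" where
  "is_hyperplane H \<longleftrightarrow> (\<exists>a. a \<noteq> (\<lambda>_. 0) \<and> H = lin_kernel a)"

definition is_arrangement :: "(var3 \<Rightarrow> 'a::field) set set \<Rightarrow> bool" where
  "is_arrangement A \<longleftrightarrow> finite A \<and> (\<forall>H\<in>A. is_hyperplane H)"

definition essential :: "(var3 \<Rightarrow> 'a::field) set set \<Rightarrow> bool" where
  "essential A \<longleftrightarrow> \<Inter>A = {(\<lambda>_. 0)}"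

text \<open>The condition delta(alpha_H) in alpha_H S does not
  depend on the choice of defining form alpha_H (they differ by a nonzero scalar);
  we require it for every defining form.\<close>
definition logder :: "(var3 \<Rightarrow> 'a::field) set set \<Rightarrow> 'a der3 set" where
  "logder A = {\<delta>. \<forall>H\<in>A. \<forall>a. a \<noteq> (\<lambda>_. 0) \<and> H = lin_kernel a
       \<longrightarrow> linform a dvd apply_lin \<delta> a}"

definition homog_der :: "'a::zero der3 \<Rightarrow> nat \<Rightarrow> bool" where
  "homog_der \<delta> d \<longleftrightarrow> \<delta> \<noteq> (\<lambda>_. 0) \<and> (\<forall>i. homogeneous (\<delta> i) d)"

definition lincomb :: "('i \<Rightarrow> 'a::comm_ring_1 poly3) \<Rightarrow> ('i \<Rightarrow> 'a der3) \<Rightarrow> 'i set \<Rightarrow> 'a der3" where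
  "lincomb f \<theta> I = (\<lambda>j. \<Sum>i\<in>I. f i * \<theta> i j)"

definition is_S_basis :: "'a::comm_ring_1 der3 set \<Rightarrow> (nat \<Rightarrow> 'a der3) \<Rightarrow> nat \<Rightarrow> bool" where
  "is_S_basis M \<theta> n \<longleftrightarrow>
     (\<forall>i<n. \<theta> i \<in> M) \<and>
     (\<forall>\<delta>\<in>M. \<exists>f. \<delta> = lincomb f \<theta> {..<n}) \<and>
     (\<forall>f. lincomb f \<theta> {..<n} = (\<lambda>_. 0) \<longrightarrow> (\<forall>i<n. f i = 0))"

definition free_with_exponents :: "(var3 \<Rightarrow> 'a::field) set set \<Rightarrow> nat list \<Rightarrow> bool" where
  "free_with_exponents A ds \<longleftrightarrow>
     (\<exists>\<theta>. is_S_basis (logder A) \<theta> (length ds) \<and> (\<forall>i<length ds. homog_der (\<theta> i) (ds ! i)))"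

end

theory Submission
  imports Defs "HOL-Algebra.Sylow" "HOL-Algebra.Multiplicative_Group"
begin

(* The Euler derivation sum_i x_i d/dx_i and the Frobenius derivation sum_i x_i^q d/dx_i are
   logarithmic for every arrangement over F_q: the latter sends alpha = sum_i a_i x_i to
   sum_i a_i x_i^q = alpha^q, because a_i^q = a_i and q is a power of the characteristic.
   If q < d2, comparing homogeneous components in a basis of degrees (1, d2, d3) shows that
   both are polynomial multiples of the degree-one basis element, whence x1 x2^q = x2 x1^q,
   which is false as q > 1. *)

(* The additive and multiplicative groups of a type-class field as HOL-Algebra groups, so
   that Sylow's and Lagrange's theorems apply to them. *)
definition field_add_group :: "'a::ab_group_add monoid" where
  "field_add_group = \<lparr>carrier = UNIV, monoid.mult = (+), one = 0\<rparr>"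

definition field_mult_group :: "'a::field monoid" where
  "field_mult_group = \<lparr>carrier = UNIV - {0}, monoid.mult = (*), one = 1\<rparr>"

lemma group_field_add_group: "group (field_add_group :: 'a::ab_group_add monoid)"
proof (rule groupI)
  fix x :: 'a
  show "\<exists>y\<in>carrier field_add_group. y \<otimes>\<^bsub>field_add_group\<^esub> x = \<one>\<^bsub>field_add_group\<^esub>"
    by (intro bexI[of _ "- x"]) (simp_all add: field_add_group_def)
qed (simp_all add: field_add_group_def add.assoc)

lemma group_field_mult_group: "group (field_mult_group :: 'a::field monoid)"
proof (rule groupI)
  fix x :: 'a
  assume "x \<in> carrier field_mult_group"
  then show "\<exists>y\<in>carrier field_mult_group. y \<otimes>\<^bsub>field_mult_group\<^esub> x = \<one>\<^bsub>field_mult_group\<^esub>"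
    by (intro bexI[of _ "inverse x"]) (simp_all add: field_mult_group_def)
qed (auto simp: field_mult_group_def mult.assoc)

lemma field_add_group_pow:
  "x [^]\<^bsub>field_add_group\<lparr>carrier := H\<rparr>\<^esub> n = of_nat n * (x :: 'a::comm_ring_1)"
  by (induction n) (simp_all add: field_add_group_def algebra_simps)

lemma field_mult_group_pow: "x [^]\<^bsub>field_mult_group\<^esub> n = (x :: 'a::field) ^ n"
  by (induction n) (simp_all add: field_mult_group_def mult.commute)

lemma prime_dvd_card_field_eq_CHAR:
  assumes r: "prime r" and dvd: "r dvd card (UNIV :: 'a::{finite,field} set)"
  shows "r = CHAR('a)"
proof (rule ccontr)
  (* Sylow yields an additive subgroup of order r; by Lagrange r kills it, so r = 0 in 'a. *)
  assume "r \<noteq> CHAR('a)"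
  then have r_nonzero: "of_nat r \<noteq> (0 :: 'a)"
    using r prime_CHAR_semidom[where 'a='a] finite_imp_CHAR_pos[where 'a='a]
    by (metis finite of_nat_eq_0_iff_char_dvd primes_dvd_imp_eq)
  obtain m where m: "card (UNIV :: 'a set) = r ^ 1 * m" using dvd by auto
  have "\<exists>H. subgroup H (field_add_group :: 'a monoid) \<and> card H = r ^ 1"
    by (rule sylow_thm[OF r group_field_add_group, where m=m]) (simp_all add: field_add_group_def order_def m)
  then obtain H where H: "subgroup H (field_add_group :: 'a monoid)" "card H = r"
    by auto
  have "of_nat r * x = 0" if "x \<in> H" for x
    using group.pow_order_eq_1[OF subgroup.subgroup_is_group[OF H(1) group_field_add_group], of x] that
    by (simp add: order_def H(2) field_add_group_pow) (simp add: field_add_group_def)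
  then have "H \<subseteq> {0}" using r_nonzero by auto
  then have "card H \<le> 1" using subset_singletonD by fastforce
  then show False using H(2) prime_gt_1_nat[OF r] by simp
qed

lemma card_field_eq_CHAR_power: "\<exists>k. card (UNIV :: 'a::{finite,field} set) = CHAR('a) ^ k"
proof -
  define q where "q = card (UNIV :: 'a set)"
  have "q > 0" unfolding q_def by (simp add: finite_UNIV_card_ge_0)
  then have "q = (\<Prod>r\<in>prime_factors q. r ^ multiplicity r q)"
    by (simp add: prod_prime_factors)
  also have "\<dots> = (\<Prod>r\<in>prime_factors q. CHAR('a) ^ multiplicity r q)"
  proof (rule prod.cong)
    fix r assume "r \<in> prime_factors q"
    then have "r = CHAR('a)"
      by (auto simp: q_def in_prime_factors_iff intro: prime_dvd_card_field_eq_CHAR)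
    then show "r ^ multiplicity r q = CHAR('a) ^ multiplicity r q" by simp
  qed simp
  also have "\<dots> = CHAR('a) ^ (\<Sum>r\<in>prime_factors q. multiplicity r q)"
    by (simp add: power_sum)
  finally show ?thesis unfolding q_def by blast
qed

lemma field_power_card_eq_same: "x ^ card (UNIV :: 'a::{finite,field} set) = (x :: 'a)"
proof (cases "x = 0")
  case False
  have "order (field_mult_group :: 'a monoid) = card (UNIV :: 'a set) - 1"
    by (simp add: order_def field_mult_group_def card_Diff_singleton)
  then have "x ^ (card (UNIV :: 'a set) - 1) = 1"
    using group.pow_order_eq_1[OF group_field_mult_group, of x] False
    by (simp add: field_mult_group_pow) (simp add: field_mult_group_def)
  then have "x ^ Suc (card (UNIV :: 'a set) - 1) = x" by simp
  then show ?thesis using finite_UNIV_card_ge_0[where 'a='a] by simp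
qed (simp add: finite_UNIV_card_ge_0)

lemma UNIV_var3: "(UNIV :: var3 set) = {X1, X2, X3}"
  using var3.exhaust by auto

lemma finite_UNIV_var3 [simp]: "finite (UNIV :: var3 set)"
  by (simp add: UNIV_var3)

lemma mdeg_conv_sum_UNIV: "mdeg m = (\<Sum>v\<in>UNIV. Poly_Mapping.lookup m v)"
  unfolding mdeg_def by (rule sum.mono_neutral_left) (auto simp: in_keys_iff)

lemma mdeg_add: "mdeg (m1 + m2) = mdeg m1 + mdeg m2"
  unfolding mdeg_conv_sum_UNIV by (simp add: lookup_add sum.distrib)

lemma mdeg_single: "mdeg (Poly_Mapping.single i n) = n"
  unfolding mdeg_def by simp

definition homog_part :: "nat \<Rightarrow> 'a::zero poly3 \<Rightarrow> 'a poly3" where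
  "homog_part d p = Abs_poly_mapping (\<lambda>m. if mdeg m = d then Poly_Mapping.lookup p m else 0)"

lemma lookup_homog_part:
  "Poly_Mapping.lookup (homog_part d p) m = (if mdeg m = d then Poly_Mapping.lookup p m else 0)"
proof -
  have "finite {m. (if mdeg m = d then Poly_Mapping.lookup p m else 0) \<noteq> 0}"
    by (rule finite_subset[of _ "Poly_Mapping.keys p"]) (auto simp: in_keys_iff)
  then show ?thesis unfolding homog_part_def by simp
qed

lemma homog_part_add: "homog_part d (p + r) = homog_part d p + (homog_part d r :: 'a::monoid_add poly3)"
  by (rule poly_mapping_eqI) (simp add: lookup_homog_part lookup_add)

lemma homog_part_zero [simp]: "homog_part d 0 = (0 :: 'a::zero poly3)"
  by (rule poly_mapping_eqI) (simp add: lookup_homog_part)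

lemma homog_part_sum:
  "homog_part d (sum f I) = (\<Sum>i\<in>I. homog_part d (f i) :: 'a::comm_monoid_add poly3)"
  by (induction I rule: infinite_finite_induct) (simp_all add: homog_part_add)

lemma homogeneous_homog_part: "homogeneous (homog_part d p) d"
  unfolding homogeneous_def by (auto simp: in_keys_iff lookup_homog_part split: if_splits)

lemma homog_part_homogeneous: "homogeneous p e \<Longrightarrow> homog_part d p = (if d = e then p else 0)"
  unfolding homogeneous_def by (rule poly_mapping_eqI) (auto simp: lookup_homog_part in_keys_iff)

lemma homogeneous_mult:
  fixes p r :: "'a::comm_semiring_0 poly3"
  assumes "homogeneous p a" "homogeneous r b"
  shows "homogeneous (p * r) (a + b)"
  unfolding homogeneous_def
proof
  fix m assume "m \<in> Poly_Mapping.keys (p * r)"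
  then obtain m1 m2 where "m = m1 + m2" "m1 \<in> Poly_Mapping.keys p" "m2 \<in> Poly_Mapping.keys r"
    using keys_mult by blast
  then show "mdeg m = a + b" using assms unfolding homogeneous_def by (simp add: mdeg_add)
qed

lemma sum_homog_parts: "(\<Sum>d\<in>mdeg ` Poly_Mapping.keys p. homog_part d p) = (p :: 'a::comm_monoid_add poly3)"
proof (rule poly_mapping_eqI)
  fix m
  have "(\<Sum>d\<in>mdeg ` Poly_Mapping.keys p. Poly_Mapping.lookup (homog_part d p) m)
      = (\<Sum>d\<in>mdeg ` Poly_Mapping.keys p. if d = mdeg m then Poly_Mapping.lookup p m else 0)"
    by (rule sum.cong) (auto simp: lookup_homog_part)
  also have "\<dots> = Poly_Mapping.lookup p m"
    by (auto simp: in_keys_iff)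
  finally show "Poly_Mapping.lookup (\<Sum>d\<in>mdeg ` Poly_Mapping.keys p. homog_part d p) m
      = Poly_Mapping.lookup p m"
    by (simp add: lookup_sum)
qed

lemma homog_part_mult_homogeneous:
  fixes p r :: "'a::comm_semiring_0 poly3"
  assumes r: "homogeneous r e"
  shows "homog_part d (p * r) = (if e \<le> d then homog_part (d - e) p * r else 0)"
proof -
  define K where "K = mdeg ` Poly_Mapping.keys p"
  have "homog_part d (p * r) = (\<Sum>k\<in>K. homog_part d (homog_part k p * r))"
    unfolding K_def by (subst sum_homog_parts[symmetric]) (simp add: sum_distrib_right homog_part_sum)
  also have "\<dots> = (\<Sum>k\<in>K. if k = d - e \<and> e \<le> d then homog_part k p * r else 0)"
    by (rule sum.cong)
      (auto simp: homog_part_homogeneous[OF homogeneous_mult[OF homogeneous_homog_part r]])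
  also have "\<dots> = (if e \<le> d then homog_part (d - e) p * r else 0)"
  proof -
    have "homog_part k p = 0" if "k \<notin> K" for k
      using that by (intro poly_mapping_eqI) (auto simp: lookup_homog_part K_def in_keys_iff)
    then show ?thesis by (auto simp: K_def)
  qed
  finally show ?thesis .
qed

lemma card_UNIV_field_ge_2: "card (UNIV :: 'a::{finite,field} set) \<ge> 2"
proof -
  have "card {0::'a, 1} \<le> card (UNIV :: 'a set)" by (rule card_mono) auto
  then show ?thesis by simp
qed

lemma CHAR_poly3: "CHAR('a::comm_ring_1 poly3) = CHAR('a)"
proof (rule CHAR_eqI)
  show "of_nat CHAR('a) = (0 :: 'a poly3)"
    by (metis of_nat_CHAR single_of_nat single_zero)
next
  fix n assume "of_nat n = (0 :: 'a poly3)"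
  then have "(of_nat n :: 'a) = 0" by (metis lookup_single_eq lookup_zero single_of_nat)
  then show "CHAR('a) dvd n" by (simp add: of_nat_eq_0_iff_char_dvd)
qed

lemma const3_power: "const3 (c::'a::comm_ring_1) ^ n = const3 (c ^ n)"
  by (induction n) (simp_all add: const3_def mult_single)

lemma var_power: "(var i :: 'a::comm_ring_1 poly3) ^ n = Poly_Mapping.single (Poly_Mapping.single i n) 1"
  by (induction n) (simp_all add: var_def mult_single single_add[symmetric])

lemma homogeneous_var_power: "homogeneous ((var i :: 'a::comm_ring_1 poly3) ^ n) n"
  unfolding var_power homogeneous_def by (simp add: mdeg_single)

lemma homogeneous_var: "homogeneous (var i :: 'a::comm_ring_1 poly3) 1"
  using homogeneous_var_power[of i 1] by simp

lemma var_mult_var_power_neq: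
  assumes "i \<noteq> j" "n \<noteq> 1"
  shows "var i * var j ^ n \<noteq> (var j * var i ^ n :: 'a::comm_ring_1 poly3)"
proof
  have monomial: "var k * var l ^ n
      = Poly_Mapping.single (Poly_Mapping.single k 1 + Poly_Mapping.single l n) (1::'a)" for k l
    using var_power[of k 1, where 'a='a] by (simp add: var_power mult_single)
  have exponents_neq: "Poly_Mapping.single i 1 + Poly_Mapping.single j n
      \<noteq> (Poly_Mapping.single j 1 + Poly_Mapping.single i n :: var3 \<Rightarrow>\<^sub>0 nat)"
  proof
    assume "Poly_Mapping.single i 1 + Poly_Mapping.single j n
      = (Poly_Mapping.single j 1 + Poly_Mapping.single i n :: var3 \<Rightarrow>\<^sub>0 nat)"
    then have "Poly_Mapping.lookup (Poly_Mapping.single i 1 + Poly_Mapping.single j n) i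
      = Poly_Mapping.lookup (Poly_Mapping.single j 1 + Poly_Mapping.single i n :: var3 \<Rightarrow>\<^sub>0 nat) i"
      by (rule arg_cong)
    then show False using assms by (simp add: lookup_add lookup_single)
  qed
  assume "var i * var j ^ n = (var j * var i ^ n :: 'a poly3)"
  then have "Poly_Mapping.lookup (var i * var j ^ n :: 'a poly3) (Poly_Mapping.single i 1 + Poly_Mapping.single j n)
      = Poly_Mapping.lookup (var j * var i ^ n :: 'a poly3) (Poly_Mapping.single i 1 + Poly_Mapping.single j n)"
    by (rule arg_cong)
  then show False
    using exponents_neq unfolding monomial by (simp add: lookup_single)
qed

lemma linform_power_card:
  fixes a :: "var3 \<Rightarrow> 'a::{finite,field}"
  shows "linform a ^ card (UNIV :: 'a set) = apply_lin (\<lambda>i. var i ^ card (UNIV :: 'a set)) a"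
proof -
  obtain k where k: "card (UNIV :: 'a set) = CHAR('a poly3) ^ k"
    using card_field_eq_CHAR_power by (auto simp: CHAR_poly3)
  have "prime CHAR('a poly3)"
    using prime_CHAR_semidom[where 'a='a] finite_imp_CHAR_pos[where 'a='a] by (simp add: CHAR_poly3)
  then have "(x + y) ^ card (UNIV :: 'a set) = x ^ card (UNIV :: 'a set) + y ^ card (UNIV :: 'a set)"
    for x y :: "'a poly3"
    by (rule freshmans_dream'[OF _ k])
  then show ?thesis
    unfolding linform_def apply_lin_def
    by (simp add: power_mult_distrib const3_power field_power_card_eq_same)
qed

lemma euler_der_in_logder: "(\<lambda>i. var i) \<in> logder A"
  unfolding logder_def apply_lin_def linform_def by simp

lemma frobenius_der_in_logder:
  "(\<lambda>i. var i ^ card (UNIV :: 'a set)) \<in> logder (A :: (var3 \<Rightarrow> 'a::{finite,field}) set set)"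
proof -
  have "linform a dvd linform a ^ card (UNIV :: 'a set)" for a :: "var3 \<Rightarrow> 'a"
    using card_UNIV_field_ge_2[where 'a='a] by (intro dvd_power) auto
  then show ?thesis unfolding logder_def by (simp add: linform_power_card)
qed

lemma homogeneous_lincomb_low_degree:
  fixes \<theta> :: "'i \<Rightarrow> 'a::comm_ring_1 der3"
  assumes "finite I"
    and \<theta>: "\<And>i j. i \<in> I \<Longrightarrow> homogeneous (\<theta> i j) (e i)"
    and \<delta>: "\<And>j. homogeneous (lincomb f \<theta> I j) d"
  shows "lincomb f \<theta> I = lincomb (\<lambda>i. homog_part (d - e i) (f i)) \<theta> {i\<in>I. e i \<le> d}"
proof
  fix j
  have "lincomb f \<theta> I j = homog_part d (lincomb f \<theta> I j)"
    using homog_part_homogeneous[OF \<delta>] by simp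
  also have "\<dots> = (\<Sum>i\<in>I. if e i \<le> d then homog_part (d - e i) (f i) * \<theta> i j else 0)"
    unfolding lincomb_def homog_part_sum by (rule sum.cong) (simp_all add: homog_part_mult_homogeneous \<theta>)
  also have "\<dots> = lincomb (\<lambda>i. homog_part (d - e i) (f i)) \<theta> {i\<in>I. e i \<le> d} j"
    unfolding lincomb_def using \<open>finite I\<close> by (simp add: sum.inter_filter)
  finally show "lincomb f \<theta> I j = \<dots>" .
qed

lemma free_low_degree_logder_multiple:
  assumes "free_with_exponents A [1, d2, d3]" "d2 \<le> d3"
  obtains \<theta>\<^sub>1 where "\<And>\<delta> d. \<delta> \<in> logder A \<Longrightarrow> (\<And>j. homogeneous (\<delta> j) d) \<Longrightarrow> d < d2
    \<Longrightarrow> \<exists>h. \<forall>j. \<delta> j = h * \<theta>\<^sub>1 j"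
proof -
  obtain \<theta> where basis: "is_S_basis (logder A) \<theta> 3"
    and deg: "\<And>i. i < 3 \<Longrightarrow> homog_der (\<theta> i) ([1, d2, d3] ! i)"
    using assms(1) unfolding free_with_exponents_def by (auto simp: numeral_3_eq_3)
  have "\<exists>h. \<forall>j. \<delta> j = h * \<theta> 0 j"
    if \<delta>: "\<delta> \<in> logder A" "\<And>j. homogeneous (\<delta> j) d" and "d < d2" for \<delta> d
  proof -
    obtain f where f: "\<delta> = lincomb f \<theta> {..<3}"
      using basis \<delta>(1) unfolding is_S_basis_def by blast
    define S where "S = {i \<in> {..<3}. [1, d2, d3] ! i \<le> d}"
    have "S \<subseteq> {0}"
      using \<open>d < d2\<close> assms(2) by (auto simp: S_def less_Suc_eq numeral_3_eq_3)
    have "\<delta> = lincomb (\<lambda>i. homog_part (d - [1, d2, d3] ! i) (f i)) \<theta> S"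
      unfolding S_def f
      by (rule homogeneous_lincomb_low_degree) (use deg \<delta>(2) f in \<open>auto simp: homog_der_def\<close>)
    also have "\<dots> = (\<lambda>j. (\<Sum>i\<in>S. homog_part (d - [1, d2, d3] ! i) (f i)) * \<theta> 0 j)"
      using \<open>S \<subseteq> {0}\<close> by (auto simp: lincomb_def sum_distrib_right intro!: sum.cong)
    finally show ?thesis by auto
  qed
  then show ?thesis using that by blast
qed

theorem mainTheorem4:
  fixes A :: "(var3 \<Rightarrow> 'a::{finite,field}) set set" and d2 d3 :: nat
  assumes "is_arrangement A" and "essential A"
    and "free_with_exponents A [1, d2, d3]" and "d2 \<le> d3"
  shows "d2 \<le> card (UNIV :: 'a set)"
proof (rule ccontr)
  define q where "q = card (UNIV :: 'a set)"
  assume "\<not> d2 \<le> card (UNIV :: 'a set)"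
  then have "2 \<le> q" "q < d2" unfolding q_def using card_UNIV_field_ge_2[where 'a='a] by auto
  obtain \<theta>\<^sub>1 where low_degree: "\<And>\<delta> d. \<delta> \<in> logder A \<Longrightarrow> (\<And>j. homogeneous (\<delta> j) d) \<Longrightarrow> d < d2
      \<Longrightarrow> \<exists>h. \<forall>j. \<delta> j = h * \<theta>\<^sub>1 j"
    using free_low_degree_logder_multiple[OF assms(3,4)] by blast
  obtain F where F: "\<And>j. var j = F * \<theta>\<^sub>1 j"
    using low_degree[OF euler_der_in_logder homogeneous_var] \<open>2 \<le> q\<close> \<open>q < d2\<close> by auto
  obtain G where G: "\<And>j. var j ^ q = G * \<theta>\<^sub>1 j"
    using low_degree[OF frobenius_der_in_logder homogeneous_var_power] \<open>q < d2\<close> unfolding q_def by auto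
  have "var X1 * var X2 ^ q = F * G * (\<theta>\<^sub>1 X1 * \<theta>\<^sub>1 X2)"
    using F[of X1] G[of X2] by (simp add: mult_ac)
  also have "\<dots> = var X2 * var X1 ^ q"
    using F[of X2] G[of X1] by (simp add: mult_ac)
  finally show False
    using var_mult_var_power_neq[of X1 X2 q, where 'a='a] \<open>2 \<le> q\<close> by simp
qed

end
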